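(* Let $\mathcal{X}$ be a subcategory of $\mathcal{C}$ closed under extensions and CoCones, and let $\mathcal{W}$ be an $\mathcal{X}$-injective cogenerator for $\mathcal{X}$. Then $(\mathcal{X},\widehat{\mathcal{W}})$ is a cotorsion pair on the extriangulated category $\widehat{\mathcal{X}}$ (with the extriangulated structure restricted from $\mathcal{C}$).
   Context: $\mathcal{C}=(\mathcal{C},\mathbb{E},\mathfrak{s})$ is an extriangulated category (in the sense of Nakaoka–Palu) with enough projectives and enough injectives; a conflation realizing $\delta\in\mathbb{E}(C,A)$ is written as an $\mathbb{E}$-triangle $A\to B\to C\dashrightarrow$. All subcategories are full, additive, closed under isomorphisms and direct summands. Higher extensions: $\mathbb{E}^1=\mathbb{E}$, $\mathbb{E}^{i+1}(X,Y)=\mathbb{E}(X,\Sigma^iY)\cong\mathbb{E}(\Omega^iX,Y)$. $\mathcal{X}$ is extension-closed if for every $\mathbb{E}$-triangle $A\to B\to C\dashrightarrow$ with $A,C\in\mathcal{X}$ one has $B\in\mathcal{X}$; closed under CoCones if for every such $\mathbb{E}$-triangle with $B,C\in\mathcal{X}$ one has $A\in\mathcal{X}$. $\mathcal{W}$ is an $\mathcal{X}$-injective cogenerator for $\mathcal{X}$ if $\mathcal{W}\subseteq\mathcal{X}$, for each $X\in\mathcal{X}$ there is an $\mathbb{E}$-triangle $X\to W\to X'\dashrightarrow$ with $W\in\mathcal{W}$, $X'\in\mathcal{X}$, and $\mathbb{E}^i(X,W)=0$ for all $X\in\mathcal{X}$, $W\in\mathcal{W}$, $i\ge1$. For a subcategory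 $\mathcal{Z}$ and $n\ge0$, $\widehat{\mathcal{Z}}_n$ is the class of objects $C$ for which there exist $\mathbb{E}$-triangles $K_{i+1}\to Z_i\to K_i\dashrightarrow$ ($0\le i\le n-1$) with $K_0=C$, all $Z_i\in\mathcal{Z}$ and $K_n\in\mathcal{Z}$; $\widehat{\mathcal{Z}}=\bigcup_n\widehat{\mathcal{Z}}_n$ ($\widehat{\mathcal{X}}$ is extension-closed in $\mathcal{C}$ under these hypotheses, hence extriangulated). A pair $(\mathcal{U},\mathcal{V})$ of subcategories of an extriangulated category $\mathcal{D}$ is a cotorsion pair on $\mathcal{D}$ if $\mathbb{E}(\mathcal{U},\mathcal{V})=0$ and every $C\in\mathcal{D}$ admits $\mathbb{E}$-triangles $V_C\to U_C\to C\dashrightarrow$ and $C\to V^C\to U^C\dashrightarrow$ in $\mathcal{D}$ with $U_C,U^C\in\mathcal{U}$, $V_C,V^C\in\mathcal{V}$. *)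

theory Defs
  imports Main
begin

text \<open>
An extriangulated category in the sense of Nakaoka--Palu, encoded concretely.
Objects have type 'o, morphisms type 'm (each morphism carries its domain and
codomain via mdom / mcod), and elements of the bifunctor E have type 'e.
Ext T C A is the abelian group E(C,A); an E-triangle A -x-> B -y-> C with
delta in E(C,A) is realised when real T delta x y holds.
epush T C a delta is a_* delta (for a : A -> B, delta in E(C,A)),
epull T A c delta is c^* delta (for c : C' -> C, delta in E(C,A)).
\<close>

record ('o, 'm, 'e) extri =
  obj   :: "'o set"
  mor   :: "'m set"
  mdom  :: "'m \<Rightarrow> 'o"
  mcod  :: "'m \<Rightarrow> 'o"
  cmp   :: "'m \<Rightarrow> 'm \<Rightarrow> 'm"   (* cmp g f = g o f *)
  idm   :: "'o \<Rightarrow> 'm"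
  madd  :: "'m \<Rightarrow> 'm \<Rightarrow> 'm"
  mzero :: "'o \<Rightarrow> 'o \<Rightarrow> 'm"
  Ext   :: "'o \<Rightarrow> 'o \<Rightarrow> 'e set"
  eadd  :: "'o \<Rightarrow> 'o \<Rightarrow> 'e \<Rightarrow> 'e \<Rightarrow> 'e"
  ezero :: "'o \<Rightarrow> 'o \<Rightarrow> 'e"
  epush :: "'o \<Rightarrow> 'm \<Rightarrow> 'e \<Rightarrow> 'e"
  epull :: "'o \<Rightarrow> 'm \<Rightarrow> 'e \<Rightarrow> 'e"
  real  :: "'e \<Rightarrow> 'm \<Rightarrow> 'm \<Rightarrow> bool"

definition hom :: "('o,'m,'e) extri \<Rightarrow> 'o \<Rightarrow> 'o \<Rightarrow> 'm set" where
  "hom T A B = {f \<in> mor T. mdom T f = A \<and> mcod T f = B}"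

definition is_iso :: "('o,'m,'e) extri \<Rightarrow> 'o \<Rightarrow> 'o \<Rightarrow> 'm \<Rightarrow> bool" where
  "is_iso T A B f \<longleftrightarrow> f \<in> hom T A B \<and>
     (\<exists>g \<in> hom T B A. cmp T g f = idm T A \<and> cmp T f g = idm T B)"

definition isomorphic :: "('o,'m,'e) extri \<Rightarrow> 'o \<Rightarrow> 'o \<Rightarrow> bool" where
  "isomorphic T A B \<longleftrightarrow> (\<exists>f. is_iso T A B f)"

definition is_zero_obj :: "('o,'m,'e) extri \<Rightarrow> 'o \<Rightarrow> bool" where
  "is_zero_obj T Z \<longleftrightarrow> Z \<in> obj T \<and> idm T Z = mzero T Z Z"

definition is_biproduct ::
  "('o,'m,'e) extri \<Rightarrow> 'o \<Rightarrow> 'o \<Rightarrow> 'o \<Rightarrow> 'm \<Rightarrow> 'm \<Rightarrow> 'm \<Rightarrow> 'm \<Rightarrow> bool" where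
  "is_biproduct T A B S i1 i2 p1 p2 \<longleftrightarrow>
     i1 \<in> hom T A S \<and> i2 \<in> hom T B S \<and> p1 \<in> hom T S A \<and> p2 \<in> hom T S B \<and>
     cmp T p1 i1 = idm T A \<and> cmp T p2 i2 = idm T B \<and>
     cmp T p1 i2 = mzero T B A \<and> cmp T p2 i1 = mzero T A B \<and>
     madd T (cmp T i1 p1) (cmp T i2 p2) = idm T S"

definition is_category :: "('o,'m,'e) extri \<Rightarrow> bool" where
  "is_category T \<longleftrightarrow>
     (\<forall>f \<in> mor T. mdom T f \<in> obj T \<and> mcod T f \<in> obj T) \<and>
     (\<forall>A \<in> obj T. idm T A \<in> hom T A A) \<and>
     (\<forall>A B C f g. f \<in> hom T A B \<longrightarrow> g \<in> hom T B C \<longrightarrow> cmp T g f \<in> hom T A C) \<and>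
     (\<forall>A B f. f \<in> hom T A B \<longrightarrow> cmp T f (idm T A) = f \<and> cmp T (idm T B) f = f) \<and>
     (\<forall>A B C D f g h. f \<in> hom T A B \<longrightarrow> g \<in> hom T B C \<longrightarrow> h \<in> hom T C D \<longrightarrow>
        cmp T h (cmp T g f) = cmp T (cmp T h g) f)"

definition is_additive :: "('o,'m,'e) extri \<Rightarrow> bool" where
  "is_additive T \<longleftrightarrow>
     (\<forall>A \<in> obj T. \<forall>B \<in> obj T.
        mzero T A B \<in> hom T A B \<and>
        (\<forall>f \<in> hom T A B. \<forall>g \<in> hom T A B. madd T f g \<in> hom T A B) \<and>
        (\<forall>f \<in> hom T A B. \<forall>g \<in> hom T A B. \<forall>h \<in> hom T A B.
            madd T (madd T f g) h = madd T f (madd T g h)) \<and>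
        (\<forall>f \<in> hom T A B. \<forall>g \<in> hom T A B. madd T f g = madd T g f) \<and>
        (\<forall>f \<in> hom T A B. madd T f (mzero T A B) = f) \<and>
        (\<forall>f \<in> hom T A B. \<exists>g \<in> hom T A B. madd T f g = mzero T A B)) \<and>
     (\<forall>A B C f g h. f \<in> hom T A B \<longrightarrow> g \<in> hom T A B \<longrightarrow> h \<in> hom T B C \<longrightarrow>
        cmp T h (madd T f g) = madd T (cmp T h f) (cmp T h g)) \<and>
     (\<forall>A B C f g h. f \<in> hom T B C \<longrightarrow> g \<in> hom T B C \<longrightarrow> h \<in> hom T A B \<longrightarrow>
        cmp T (madd T f g) h = madd T (cmp T f h) (cmp T g h)) \<and>
     (\<exists>Z. is_zero_obj T Z) \<and>
     (\<forall>A \<in> obj T. \<forall>B \<in> obj T. \<exists>S i1 i2 p1 p2. S \<in> obj T \<and> is_biproduct T A B S i1 i2 p1 p2)"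

definition is_biadditive_E :: "('o,'m,'e) extri \<Rightarrow> bool" where
  "is_biadditive_E T \<longleftrightarrow>
     (\<forall>C \<in> obj T. \<forall>A \<in> obj T.
        ezero T C A \<in> Ext T C A \<and>
        (\<forall>d \<in> Ext T C A. \<forall>e \<in> Ext T C A. eadd T C A d e \<in> Ext T C A) \<and>
        (\<forall>d \<in> Ext T C A. \<forall>e \<in> Ext T C A. \<forall>f \<in> Ext T C A.
            eadd T C A (eadd T C A d e) f = eadd T C A d (eadd T C A e f)) \<and>
        (\<forall>d \<in> Ext T C A. \<forall>e \<in> Ext T C A. eadd T C A d e = eadd T C A e d) \<and>
        (\<forall>d \<in> Ext T C A. eadd T C A d (ezero T C A) = d) \<and>
        (\<forall>d \<in> Ext T C A. \<exists>e \<in> Ext T C A. eadd T C A d e = ezero T C A)) \<and>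
     (\<forall>C A B a d. C \<in> obj T \<longrightarrow> a \<in> hom T A B \<longrightarrow> d \<in> Ext T C A \<longrightarrow>
        epush T C a d \<in> Ext T C B) \<and>
     (\<forall>A C C' c d. A \<in> obj T \<longrightarrow> c \<in> hom T C' C \<longrightarrow> d \<in> Ext T C A \<longrightarrow>
        epull T A c d \<in> Ext T C' A) \<and>
     (\<forall>C A d. C \<in> obj T \<longrightarrow> A \<in> obj T \<longrightarrow> d \<in> Ext T C A \<longrightarrow>
        epush T C (idm T A) d = d \<and> epull T A (idm T C) d = d) \<and>
     (\<forall>C A B D a b d. C \<in> obj T \<longrightarrow> a \<in> hom T A B \<longrightarrow> b \<in> hom T B D \<longrightarrow> d \<in> Ext T C A \<longrightarrow>
        epush T C (cmp T b a) d = epush T C b (epush T C a d)) \<and>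
     (\<forall>A C C' C'' c c' d. A \<in> obj T \<longrightarrow> c \<in> hom T C' C \<longrightarrow> c' \<in> hom T C'' C' \<longrightarrow>
        d \<in> Ext T C A \<longrightarrow> epull T A (cmp T c c') d = epull T A c' (epull T A c d)) \<and>
     (\<forall>A B C C' a c d. a \<in> hom T A B \<longrightarrow> c \<in> hom T C' C \<longrightarrow> d \<in> Ext T C A \<longrightarrow>
        epush T C' a (epull T A c d) = epull T B c (epush T C a d)) \<and>
     (\<forall>C A B a d e. C \<in> obj T \<longrightarrow> a \<in> hom T A B \<longrightarrow> d \<in> Ext T C A \<longrightarrow> e \<in> Ext T C A \<longrightarrow>
        epush T C a (eadd T C A d e) = eadd T C B (epush T C a d) (epush T C a e)) \<and>
     (\<forall>A C C' c d e. A \<in> obj T \<longrightarrow> c \<in> hom T C' C \<longrightarrow> d \<in> Ext T C A \<longrightarrow> e \<in> Ext T C A \<longrightarrow>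
        epull T A c (eadd T C A d e) = eadd T C' A (epull T A c d) (epull T A c e)) \<and>
     (\<forall>C A B a a' d. C \<in> obj T \<longrightarrow> a \<in> hom T A B \<longrightarrow> a' \<in> hom T A B \<longrightarrow> d \<in> Ext T C A \<longrightarrow>
        epush T C (madd T a a') d = eadd T C B (epush T C a d) (epush T C a' d)) \<and>
     (\<forall>A C C' c c' d. A \<in> obj T \<longrightarrow> c \<in> hom T C' C \<longrightarrow> c' \<in> hom T C' C \<longrightarrow> d \<in> Ext T C A \<longrightarrow>
        epull T A (madd T c c') d = eadd T C' A (epull T A c d) (epull T A c' d))"

definition etri :: "('o,'m,'e) extri \<Rightarrow> 'o \<Rightarrow> 'o \<Rightarrow> 'o \<Rightarrow> 'm \<Rightarrow> 'm \<Rightarrow> 'e \<Rightarrow> bool" where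
  "etri T A B C x y d \<longleftrightarrow>
     A \<in> obj T \<and> C \<in> obj T \<and> x \<in> hom T A B \<and> y \<in> hom T B C \<and> d \<in> Ext T C A \<and> real T d x y"

definition conflation :: "('o,'m,'e) extri \<Rightarrow> 'o \<Rightarrow> 'o \<Rightarrow> 'o \<Rightarrow> bool" where
  "conflation T A B C \<longleftrightarrow> (\<exists>x y d. etri T A B C x y d)"

text \<open>s is a realization: s(delta) is an equivalence class of sequences, and (ET2).\<close>
definition is_realization :: "('o,'m,'e) extri \<Rightarrow> bool" where
  "is_realization T \<longleftrightarrow>
     (\<forall>d x y. real T d x y \<longrightarrow> etri T (mdom T x) (mcod T x) (mcod T y) x y d) \<and>
     (\<forall>C \<in> obj T. \<forall>A \<in> obj T. \<forall>d \<in> Ext T C A. \<exists>B x y. etri T A B C x y d) \<and>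
     (\<forall>A B B' C x y x' y' d. etri T A B C x y d \<longrightarrow> etri T A B' C x' y' d \<longrightarrow>
        (\<exists>b. is_iso T B B' b \<and> cmp T b x = x' \<and> cmp T y' b = y)) \<and>
     (\<forall>A B B' C x y d b b'. etri T A B C x y d \<longrightarrow> b \<in> hom T B B' \<longrightarrow> b' \<in> hom T B' B \<longrightarrow>
        cmp T b' b = idm T B \<longrightarrow> cmp T b b' = idm T B' \<longrightarrow> real T d (cmp T b x) (cmp T y b')) \<and>
     (\<forall>A B C A' B' C' x y x' y' d d' a c.
        etri T A B C x y d \<longrightarrow> etri T A' B' C' x' y' d' \<longrightarrow>
        a \<in> hom T A A' \<longrightarrow> c \<in> hom T C C' \<longrightarrow> epush T C a d = epull T A' c d' \<longrightarrow>
        (\<exists>b \<in> hom T B B'. cmp T b x = cmp T x' a \<and> cmp T y' b = cmp T c y))"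

definition additive_realization :: "('o,'m,'e) extri \<Rightarrow> bool" where
  "additive_realization T \<longleftrightarrow>
     (\<forall>A C S i1 i2 p1 p2. is_biproduct T A C S i1 i2 p1 p2 \<longrightarrow>
        real T (ezero T C A) i1 p2) \<and>
     (\<forall>A B C A' B' C' x y d x' y' d' SA iA iA' pA pA' SB iB iB' pB pB' SC iC iC' pC pC'.
        etri T A B C x y d \<longrightarrow> etri T A' B' C' x' y' d' \<longrightarrow>
        is_biproduct T A A' SA iA iA' pA pA' \<longrightarrow>
        is_biproduct T B B' SB iB iB' pB pB' \<longrightarrow>
        is_biproduct T C C' SC iC iC' pC pC' \<longrightarrow>
        real T (eadd T SC SA (epush T SC iA (epull T A pC d)) (epush T SC iA' (epull T A' pC' d')))
               (madd T (cmp T iB (cmp T x pA)) (cmp T iB' (cmp T x' pA')))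
               (madd T (cmp T iC (cmp T y pB)) (cmp T iC' (cmp T y' pB'))))"

definition ET3 :: "('o,'m,'e) extri \<Rightarrow> bool" where
  "ET3 T \<longleftrightarrow>
     (\<forall>A B C A' B' C' x y x' y' d d' a b.
        etri T A B C x y d \<longrightarrow> etri T A' B' C' x' y' d' \<longrightarrow>
        a \<in> hom T A A' \<longrightarrow> b \<in> hom T B B' \<longrightarrow> cmp T b x = cmp T x' a \<longrightarrow>
        (\<exists>c \<in> hom T C C'. cmp T c y = cmp T y' b \<and> epush T C a d = epull T A' c d'))"

definition ET3op :: "('o,'m,'e) extri \<Rightarrow> bool" where
  "ET3op T \<longleftrightarrow>
     (\<forall>A B C A' B' C' x y x' y' d d' b c.
        etri T A B C x y d \<longrightarrow> etri T A' B' C' x' y' d' \<longrightarrow>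
        b \<in> hom T B B' \<longrightarrow> c \<in> hom T C C' \<longrightarrow> cmp T c y = cmp T y' b \<longrightarrow>
        (\<exists>a \<in> hom T A A'. cmp T x' a = cmp T b x \<and> epush T C a d = epull T A' c d'))"

definition ET4 :: "('o,'m,'e) extri \<Rightarrow> bool" where
  "ET4 T \<longleftrightarrow>
     (\<forall>A B C D F f f' g g' d d'.
        etri T A B D f f' d \<longrightarrow> etri T B C F g g' d' \<longrightarrow>
        (\<exists>E h h' dd e d''.
           etri T A C E h h' d'' \<and> dd \<in> hom T D E \<and> e \<in> hom T E F \<and>
           etri T D E F dd e (epush T F f' d') \<and>
           epull T A dd d'' = d \<and>
           epush T E f d'' = epull T B e d' \<and>
           h = cmp T g f \<and> cmp T h' g = cmp T dd f' \<and> cmp T e h' = g'))"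

definition ET4op :: "('o,'m,'e) extri \<Rightarrow> bool" where
  "ET4op T \<longleftrightarrow>
     (\<forall>A B C D F f f' g g' d d'.
        etri T D A B f' f d \<longrightarrow> etri T F B C g' g d' \<longrightarrow>
        (\<exists>E h h' dd e d''.
           etri T E A C h' h d'' \<and> dd \<in> hom T D E \<and> e \<in> hom T E F \<and>
           etri T D E F dd e (epull T D g' d) \<and>
           d' = epush T C e d'' \<and>
           epush T B dd d = epull T E g d'' \<and>
           h = cmp T g f \<and> cmp T h' dd = f' \<and> cmp T f h' = cmp T g' e))"

definition extriangulated :: "('o,'m,'e) extri \<Rightarrow> bool" where
  "extriangulated T \<longleftrightarrow> is_category T \<and> is_additive T \<and> is_biadditive_E T \<and>
     is_realization T \<and> additive_realization T \<and> ET3 T \<and> ET3op T \<and> ET4 T \<and> ET4op T"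

definition projective :: "('o,'m,'e) extri \<Rightarrow> 'o \<Rightarrow> bool" where
  "projective T P \<longleftrightarrow> P \<in> obj T \<and>
     (\<forall>A B C x y d f. etri T A B C x y d \<longrightarrow> f \<in> hom T P C \<longrightarrow>
        (\<exists>g \<in> hom T P B. cmp T y g = f))"

definition injective :: "('o,'m,'e) extri \<Rightarrow> 'o \<Rightarrow> bool" where
  "injective T I \<longleftrightarrow> I \<in> obj T \<and>
     (\<forall>A B C x y d f. etri T A B C x y d \<longrightarrow> f \<in> hom T A I \<longrightarrow>
        (\<exists>g \<in> hom T B I. cmp T g x = f))"

definition enough_projectives :: "('o,'m,'e) extri \<Rightarrow> bool" where
  "enough_projectives T \<longleftrightarrow> (\<forall>C \<in> obj T. \<exists>A P. projective T P \<and> conflation T A P C)"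

definition enough_injectives :: "('o,'m,'e) extri \<Rightarrow> bool" where
  "enough_injectives T \<longleftrightarrow> (\<forall>A \<in> obj T. \<exists>I C. injective T I \<and> conflation T A I C)"

definition Ext_zero :: "('o,'m,'e) extri \<Rightarrow> 'o \<Rightarrow> 'o \<Rightarrow> bool" where
  "Ext_zero T C A \<longleftrightarrow> Ext T C A = {ezero T C A}"

text \<open>Higher extensions: E^n(X,Y) = E(X, Sigma^(n-1) Y) = 0 for n \<ge> 1, where
Sigma^k Y is obtained from any chain of E-triangles L_j -> I_j -> L_(j+1)
with I_j injective and L_0 = Y (the vanishing is independent of the choices).\<close>
definition higher_Ext_zero :: "('o,'m,'e) extri \<Rightarrow> nat \<Rightarrow> 'o \<Rightarrow> 'o \<Rightarrow> bool" where
  "higher_Ext_zero T n X Y \<longleftrightarrow>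
     (\<forall>L I. L 0 = Y \<longrightarrow>
        (\<forall>j < n - 1. injective T (I j) \<and> conflation T (L j) (I j) (L (Suc j))) \<longrightarrow>
        Ext_zero T X (L (n - 1)))"

text \<open>Full additive subcategory S of the full subcategory D (here D is a set of
objects), closed under isomorphisms and direct summands (within D).\<close>
definition subcat_in :: "('o,'m,'e) extri \<Rightarrow> 'o set \<Rightarrow> 'o set \<Rightarrow> bool" where
  "subcat_in T D S \<longleftrightarrow> S \<subseteq> D \<and>
     (\<exists>Z \<in> S. is_zero_obj T Z) \<and>
     (\<forall>A B S' i1 i2 p1 p2. A \<in> S \<longrightarrow> B \<in> S \<longrightarrow> S' \<in> D \<longrightarrow>
        is_biproduct T A B S' i1 i2 p1 p2 \<longrightarrow> S' \<in> S) \<and>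
     (\<forall>A B. A \<in> S \<longrightarrow> B \<in> D \<longrightarrow> isomorphic T A B \<longrightarrow> B \<in> S) \<and>
     (\<forall>A B S' i1 i2 p1 p2. S' \<in> S \<longrightarrow> A \<in> D \<longrightarrow> B \<in> D \<longrightarrow>
        is_biproduct T A B S' i1 i2 p1 p2 \<longrightarrow> A \<in> S)"

definition ext_closed :: "('o,'m,'e) extri \<Rightarrow> 'o set \<Rightarrow> bool" where
  "ext_closed T X \<longleftrightarrow> (\<forall>A B C. conflation T A B C \<longrightarrow> A \<in> X \<longrightarrow> C \<in> X \<longrightarrow> B \<in> X)"

definition cocone_closed :: "('o,'m,'e) extri \<Rightarrow> 'o set \<Rightarrow> bool" where
  "cocone_closed T X \<longleftrightarrow> (\<forall>A B C. conflation T A B C \<longrightarrow> B \<in> X \<longrightarrow> C \<in> X \<longrightarrow> A \<in> X)"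

definition inj_cogenerator :: "('o,'m,'e) extri \<Rightarrow> 'o set \<Rightarrow> 'o set \<Rightarrow> bool" where
  "inj_cogenerator T X W \<longleftrightarrow> W \<subseteq> X \<and>
     (\<forall>A \<in> X. \<exists>V A'. V \<in> W \<and> A' \<in> X \<and> conflation T A V A') \<and>
     (\<forall>A \<in> X. \<forall>V \<in> W. \<forall>i \<ge> 1. higher_Ext_zero T i A V)"

definition hat_n :: "('o,'m,'e) extri \<Rightarrow> 'o set \<Rightarrow> nat \<Rightarrow> 'o set" where
  "hat_n T Z n = {C. \<exists>K Zs. K 0 = C \<and>
       (\<forall>i < n. Zs i \<in> Z \<and> conflation T (K (Suc i)) (Zs i) (K i)) \<and> K n \<in> Z}"

definition hat :: "('o,'m,'e) extri \<Rightarrow> 'o set \<Rightarrow> 'o set" where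
  "hat T Z = (\<Union>n. hat_n T Z n)"

text \<open>Cotorsion pair (U,V) on the extriangulated (full, extension-closed) subcategory D,
whose E-triangles are the E-triangles of T with all terms in D.\<close>
definition cotorsion_pair_on :: "('o,'m,'e) extri \<Rightarrow> 'o set \<Rightarrow> 'o set \<Rightarrow> 'o set \<Rightarrow> bool" where
  "cotorsion_pair_on T D U V \<longleftrightarrow>
     subcat_in T D U \<and> subcat_in T D V \<and>
     (\<forall>A \<in> U. \<forall>B \<in> V. Ext_zero T A B) \<and>
     (\<forall>C \<in> D. \<exists>VC UC. VC \<in> V \<and> UC \<in> U \<and> conflation T VC UC C) \<and>
     (\<forall>C \<in> D. \<exists>VC UC. VC \<in> V \<and> UC \<in> U \<and> conflation T C VC UC)"

end

theory Submission
  imports Defs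
begin

text \<open>
  Dimension shifting along injective cosyzygies shows, by a simultaneous induction on j, that the
  vanishing of E^(j+1)(X, -) passes to middle terms of conflations, and to the cone Y of a
  conflation K \<rightarrow> V \<rightarrow> Y once K satisfies it one degree higher. Objects of W satisfy it in every
  degree, hence so does every object of W-hat, and E(X, W-hat) = 0.

  The approximations of C in X-hat are built along a resolution K \<rightarrow> X0 \<rightarrow> C: pushing it out along a
  right approximation K \<rightarrow> V \<rightarrow> U of K gives V \<rightarrow> M \<rightarrow> C with M in X (extension closure), and
  composing with M \<rightarrow> W' \<rightarrow> M' via (ET4) gives C \<rightarrow> E \<rightarrow> M' with E in W-hat. Finally, the
  cogenerator conflation of an object of X that is E-orthogonal to X splits, so X \<inter> X^\<bottom> = W; with the
  left approximation this shows that the objects of X-hat orthogonal to X are exactly W-hat, which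
  gives the closure properties of W-hat.
\<close>

lemma subcat_in_zero_obj: "subcat_in T D S \<Longrightarrow> \<exists>Z \<in> S. is_zero_obj T Z"
  and subcat_in_biproduct: "subcat_in T D S \<Longrightarrow> A \<in> S \<Longrightarrow> B \<in> S \<Longrightarrow> S' \<in> D \<Longrightarrow>
    is_biproduct T A B S' i1 i2 p1 p2 \<Longrightarrow> S' \<in> S"
  and subcat_in_iso: "subcat_in T D S \<Longrightarrow> A \<in> S \<Longrightarrow> B \<in> D \<Longrightarrow> isomorphic T A B \<Longrightarrow> B \<in> S"
  and subcat_in_summand: "subcat_in T D S \<Longrightarrow> S' \<in> S \<Longrightarrow> A \<in> D \<Longrightarrow> B \<in> D \<Longrightarrow>
    is_biproduct T A B S' i1 i2 p1 p2 \<Longrightarrow> A \<in> S"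
  unfolding subcat_in_def by blast+

lemma subcat_in_restrict:
  assumes S: "subcat_in T D S" and D': "D' \<subseteq> D" and "S \<subseteq> D'"
  shows "subcat_in T D' S"
  unfolding subcat_in_def
proof (intro conjI allI impI)
  show "S \<subseteq> D'" by fact
  show "\<exists>Z\<in>S. is_zero_obj T Z" using subcat_in_zero_obj[OF S] .
next
  fix A B S' i1 i2 p1 p2 assume "A \<in> S" "B \<in> S" "S' \<in> D'" "is_biproduct T A B S' i1 i2 p1 p2"
  then show "S' \<in> S" using subcat_in_biproduct[OF S] D' by blast
next
  fix A B assume "A \<in> S" "B \<in> D'" "isomorphic T A B"
  then show "B \<in> S" using subcat_in_iso[OF S] D' by blast
next
  fix A B S' i1 i2 p1 p2 assume "S' \<in> S" "A \<in> D'" "B \<in> D'" "is_biproduct T A B S' i1 i2 p1 p2"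
  then show "A \<in> S" using subcat_in_summand[OF S] D' by blast
qed

lemma hat_n_0: "hat_n T Z 0 = Z"
  unfolding hat_n_def by auto

lemma hat_n_Suc_iff:
  "C \<in> hat_n T Z (Suc n) \<longleftrightarrow> (\<exists>K Z0. Z0 \<in> Z \<and> conflation T K Z0 C \<and> K \<in> hat_n T Z n)"
proof
  assume "C \<in> hat_n T Z (Suc n)"
  then obtain K Zs where K: "K 0 = C" "\<forall>i < Suc n. Zs i \<in> Z \<and> conflation T (K (Suc i)) (Zs i) (K i)"
      "K (Suc n) \<in> Z"
    unfolding hat_n_def by blast
  then have "K 1 \<in> hat_n T Z n"
    unfolding hat_n_def by (intro CollectI exI[of _ "\<lambda>i. K (Suc i)"] exI[of _ "\<lambda>i. Zs (Suc i)"]) auto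
  then show "\<exists>K Z0. Z0 \<in> Z \<and> conflation T K Z0 C \<and> K \<in> hat_n T Z n" using K by force
next
  assume "\<exists>K Z0. Z0 \<in> Z \<and> conflation T K Z0 C \<and> K \<in> hat_n T Z n"
  then obtain Z0 K Zs where "Z0 \<in> Z" "conflation T (K 0) Z0 C"
      "\<forall>i < n. Zs i \<in> Z \<and> conflation T (K (Suc i)) (Zs i) (K i)" "K n \<in> Z"
    unfolding hat_n_def by blast
  then show "C \<in> hat_n T Z (Suc n)"
    unfolding hat_n_def
    by (intro CollectI exI[of _ "case_nat C K"] exI[of _ "case_nat Z0 Zs"]) (auto split: nat.split)
qed

lemma hat_induct[consumes 1, case_names base step]:
  assumes C: "C \<in> hat T Z"
    and base: "\<And>C. C \<in> Z \<Longrightarrow> P C"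
    and step: "\<And>K Z0 C. Z0 \<in> Z \<Longrightarrow> conflation T K Z0 C \<Longrightarrow> K \<in> hat T Z \<Longrightarrow> P K \<Longrightarrow> P C"
  shows "P C"
proof -
  obtain n where "C \<in> hat_n T Z n" using C unfolding hat_def by blast
  then show ?thesis
  proof (induction n arbitrary: C)
    case 0
    then show ?case using base by (simp add: hat_n_0)
  next
    case (Suc n)
    then obtain K Z0 where K: "Z0 \<in> Z" "conflation T K Z0 C" "K \<in> hat_n T Z n"
      unfolding hat_n_Suc_iff by blast
    then have "K \<in> hat T Z" unfolding hat_def by blast
    then show ?case using step[OF K(1,2)] Suc.IH[OF K(3)] by blast
  qed
qed

lemma hat_cases:
  assumes "C \<in> hat T Z"
  obtains "C \<in> Z" | K Z0 where "Z0 \<in> Z" "conflation T K Z0 C" "K \<in> hat T Z"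
  using assms by (induction rule: hat_induct) blast+

lemma hat_base: "C \<in> Z \<Longrightarrow> C \<in> hat T Z"
  unfolding hat_def using hat_n_0[of T Z] by auto

lemma hat_extend:
  assumes "Z0 \<in> Z" and "conflation T K Z0 C" and "K \<in> hat T Z"
  shows "C \<in> hat T Z"
proof -
  obtain n where "K \<in> hat_n T Z n" using assms(3) unfolding hat_def by blast
  then have "C \<in> hat_n T Z (Suc n)" unfolding hat_n_Suc_iff using assms(1,2) by blast
  then show ?thesis unfolding hat_def by blast
qed

lemma hat_mono:
  assumes "Z1 \<subseteq> Z2"
  shows "hat T Z1 \<subseteq> hat T Z2"
proof
  fix C assume "C \<in> hat T Z1"
  then show "C \<in> hat T Z2"
  proof (induction rule: hat_induct)
    case (base C)
    then show ?case using assms hat_base[of C Z2 T] by blast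
  next
    case (step K Z0 C)
    then show ?case using assms hat_extend[of Z0 Z2 T K C] by blast
  qed
qed

lemma higher_Ext_zero_Suc_0: "higher_Ext_zero T (Suc 0) X Y \<longleftrightarrow> Ext_zero T X Y"
  unfolding higher_Ext_zero_def
proof
  assume "\<forall>L I. L 0 = Y \<longrightarrow> (\<forall>j < Suc 0 - 1. injective T (I j) \<and> conflation T (L j) (I j) (L (Suc j))) \<longrightarrow>
      Ext_zero T X (L (Suc 0 - 1))"
  then show "Ext_zero T X Y" by (elim allE[of _ "\<lambda>_. Y"]) simp
qed simp

lemma higher_Ext_zero_cosyzygy:
  assumes J: "injective T J" and c: "conflation T Y J Y'" and h: "higher_Ext_zero T (Suc (Suc j)) X Y"
  shows "higher_Ext_zero T (Suc j) X Y'"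
  unfolding higher_Ext_zero_def
proof (intro allI impI)
  fix L I assume L0: "L 0 = Y'"
    and ch: "\<forall>i < Suc j - 1. injective T (I i) \<and> conflation T (L i) (I i) (L (Suc i))"
  have "\<forall>i < Suc j. injective T (case_nat J I i) \<and>
      conflation T (case_nat Y L i) (case_nat J I i) (case_nat Y L (Suc i))"
    using J c L0 ch by (auto split: nat.split)
  then show "Ext_zero T X (L (Suc j - 1))"
    using h unfolding higher_Ext_zero_def by (elim allE[of _ "case_nat Y L"] allE[of _ "case_nat J I"]) simp
qed

lemma higher_Ext_zero_SucI:
  assumes h: "\<And>J Y'. injective T J \<Longrightarrow> conflation T Y J Y' \<Longrightarrow> higher_Ext_zero T (Suc j) X Y'"
  shows "higher_Ext_zero T (Suc (Suc j)) X Y"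
  unfolding higher_Ext_zero_def
proof (intro allI impI)
  fix L I assume L0: "L 0 = Y"
    and ch: "\<forall>i < Suc (Suc j) - 1. injective T (I i) \<and> conflation T (L i) (I i) (L (Suc i))"
  then have "higher_Ext_zero T (Suc j) X (L 1)" using h by auto
  moreover have "\<forall>i < j. injective T (I (Suc i)) \<and> conflation T (L (Suc i)) (I (Suc i)) (L (Suc (Suc i)))"
    using ch by auto
  ultimately show "Ext_zero T X (L (Suc (Suc j) - 1))"
    unfolding higher_Ext_zero_def by (elim allE[of _ "\<lambda>i. L (Suc i)"] allE[of _ "\<lambda>i. I (Suc i)"]) simp
qed

locale extri_cat =
  fixes T :: "('o,'m,'e) extri"
  assumes extriangulated: "extriangulated T"
begin

lemma is_category: "is_category T"
  and is_additive: "is_additive T"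
  and is_biadditive_E: "is_biadditive_E T"
  and is_realization: "is_realization T"
  and additive_realization: "additive_realization T"
  and ET3: "ET3 T" and ET4: "ET4 T" and ET4op: "ET4op T"
  using extriangulated unfolding extriangulated_def by blast+

lemma hom_objs: "f \<in> hom T A B \<Longrightarrow> A \<in> obj T \<and> B \<in> obj T"
  using is_category unfolding is_category_def hom_def by blast

lemma id_hom: "A \<in> obj T \<Longrightarrow> idm T A \<in> hom T A A"
  and comp_hom: "f \<in> hom T A B \<Longrightarrow> g \<in> hom T B C \<Longrightarrow> cmp T g f \<in> hom T A C"
  and comp_id_right: "f \<in> hom T A B \<Longrightarrow> cmp T f (idm T A) = f"
  and comp_id_left: "f \<in> hom T A B \<Longrightarrow> cmp T (idm T B) f = f"
  and comp_assoc: "f \<in> hom T A B \<Longrightarrow> g \<in> hom T B C \<Longrightarrow> h \<in> hom T C D \<Longrightarrow>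
        cmp T h (cmp T g f) = cmp T (cmp T h g) f"
  using is_category unfolding is_category_def by blast+

lemma zero_hom: "A \<in> obj T \<Longrightarrow> B \<in> obj T \<Longrightarrow> mzero T A B \<in> hom T A B"
  and add_hom: "f \<in> hom T A B \<Longrightarrow> g \<in> hom T A B \<Longrightarrow> madd T f g \<in> hom T A B"
  and add_assoc: "f \<in> hom T A B \<Longrightarrow> g \<in> hom T A B \<Longrightarrow> h \<in> hom T A B \<Longrightarrow>
        madd T (madd T f g) h = madd T f (madd T g h)"
  and add_commute: "f \<in> hom T A B \<Longrightarrow> g \<in> hom T A B \<Longrightarrow> madd T f g = madd T g f"
  and add_zero_right: "f \<in> hom T A B \<Longrightarrow> madd T f (mzero T A B) = f"
  and add_inverse_ex: "f \<in> hom T A B \<Longrightarrow> \<exists>g \<in> hom T A B. madd T f g = mzero T A B"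
  using is_additive hom_objs unfolding is_additive_def by meson+

lemma comp_distrib_left: "f \<in> hom T A B \<Longrightarrow> g \<in> hom T A B \<Longrightarrow> h \<in> hom T B C \<Longrightarrow>
        cmp T h (madd T f g) = madd T (cmp T h f) (cmp T h g)"
  and comp_distrib_right: "f \<in> hom T B C \<Longrightarrow> g \<in> hom T B C \<Longrightarrow> h \<in> hom T A B \<Longrightarrow>
        cmp T (madd T f g) h = madd T (cmp T f h) (cmp T g h)"
  and zero_object_ex: "\<exists>Z. is_zero_obj T Z"
  and biproduct_ex: "A \<in> obj T \<Longrightarrow> B \<in> obj T \<Longrightarrow>
        \<exists>S i1 i2 p1 p2. S \<in> obj T \<and> is_biproduct T A B S i1 i2 p1 p2"
  using is_additive unfolding is_additive_def by blast+

lemma ezero_Ext: "C \<in> obj T \<Longrightarrow> A \<in> obj T \<Longrightarrow> ezero T C A \<in> Ext T C A"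
  and eadd_Ext: "C \<in> obj T \<Longrightarrow> A \<in> obj T \<Longrightarrow> d \<in> Ext T C A \<Longrightarrow> e \<in> Ext T C A \<Longrightarrow>
        eadd T C A d e \<in> Ext T C A"
  and eadd_assoc: "C \<in> obj T \<Longrightarrow> A \<in> obj T \<Longrightarrow> d \<in> Ext T C A \<Longrightarrow> e \<in> Ext T C A \<Longrightarrow>
        f \<in> Ext T C A \<Longrightarrow> eadd T C A (eadd T C A d e) f = eadd T C A d (eadd T C A e f)"
  and eadd_commute: "C \<in> obj T \<Longrightarrow> A \<in> obj T \<Longrightarrow> d \<in> Ext T C A \<Longrightarrow> e \<in> Ext T C A \<Longrightarrow>
        eadd T C A d e = eadd T C A e d"
  and eadd_ezero: "C \<in> obj T \<Longrightarrow> A \<in> obj T \<Longrightarrow> d \<in> Ext T C A \<Longrightarrow> eadd T C A d (ezero T C A) = d"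
  and eadd_inverse_ex: "C \<in> obj T \<Longrightarrow> A \<in> obj T \<Longrightarrow> d \<in> Ext T C A \<Longrightarrow>
        \<exists>e \<in> Ext T C A. eadd T C A d e = ezero T C A"
  and epush_Ext: "C \<in> obj T \<Longrightarrow> a \<in> hom T A B \<Longrightarrow> d \<in> Ext T C A \<Longrightarrow> epush T C a d \<in> Ext T C B"
  and epull_Ext: "A \<in> obj T \<Longrightarrow> c \<in> hom T C' C \<Longrightarrow> d \<in> Ext T C A \<Longrightarrow> epull T A c d \<in> Ext T C' A"
  and epush_id: "C \<in> obj T \<Longrightarrow> A \<in> obj T \<Longrightarrow> d \<in> Ext T C A \<Longrightarrow> epush T C (idm T A) d = d"
  and epull_id: "C \<in> obj T \<Longrightarrow> A \<in> obj T \<Longrightarrow> d \<in> Ext T C A \<Longrightarrow> epull T A (idm T C) d = d"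
  and epush_comp: "C \<in> obj T \<Longrightarrow> a \<in> hom T A B \<Longrightarrow> b \<in> hom T B D \<Longrightarrow> d \<in> Ext T C A \<Longrightarrow>
        epush T C (cmp T b a) d = epush T C b (epush T C a d)"
  and epull_comp: "A \<in> obj T \<Longrightarrow> c \<in> hom T C' C \<Longrightarrow> c' \<in> hom T C'' C' \<Longrightarrow> d \<in> Ext T C A \<Longrightarrow>
        epull T A (cmp T c c') d = epull T A c' (epull T A c d)"
  and epush_epull: "a \<in> hom T A B \<Longrightarrow> c \<in> hom T C' C \<Longrightarrow> d \<in> Ext T C A \<Longrightarrow>
        epush T C' a (epull T A c d) = epull T B c (epush T C a d)"
  and epush_eadd: "C \<in> obj T \<Longrightarrow> a \<in> hom T A B \<Longrightarrow> d \<in> Ext T C A \<Longrightarrow> e \<in> Ext T C A \<Longrightarrow>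
        epush T C a (eadd T C A d e) = eadd T C B (epush T C a d) (epush T C a e)"
  and epull_eadd: "A \<in> obj T \<Longrightarrow> c \<in> hom T C' C \<Longrightarrow> d \<in> Ext T C A \<Longrightarrow> e \<in> Ext T C A \<Longrightarrow>
        epull T A c (eadd T C A d e) = eadd T C' A (epull T A c d) (epull T A c e)"
  and epush_madd: "C \<in> obj T \<Longrightarrow> a \<in> hom T A B \<Longrightarrow> a' \<in> hom T A B \<Longrightarrow> d \<in> Ext T C A \<Longrightarrow>
        epush T C (madd T a a') d = eadd T C B (epush T C a d) (epush T C a' d)"
  and epull_madd: "A \<in> obj T \<Longrightarrow> c \<in> hom T C' C \<Longrightarrow> c' \<in> hom T C' C \<Longrightarrow> d \<in> Ext T C A \<Longrightarrow>
        epull T A (madd T c c') d = eadd T C' A (epull T A c d) (epull T A c' d)"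
  by (insert is_biadditive_E, unfold is_biadditive_E_def) metis+

lemma etri_real: "real T d x y \<Longrightarrow> etri T (mdom T x) (mcod T x) (mcod T y) x y d"
  and etri_realize: "C \<in> obj T \<Longrightarrow> A \<in> obj T \<Longrightarrow> d \<in> Ext T C A \<Longrightarrow> \<exists>B x y. etri T A B C x y d"
  and etri_unique: "etri T A B C x y d \<Longrightarrow> etri T A B' C x' y' d \<Longrightarrow>
        \<exists>b. is_iso T B B' b \<and> cmp T b x = x' \<and> cmp T y' b = y"
  and etri_morphism: "etri T A B C x y d \<Longrightarrow> etri T A' B' C' x' y' d' \<Longrightarrow>
        a \<in> hom T A A' \<Longrightarrow> c \<in> hom T C C' \<Longrightarrow> epush T C a d = epull T A' c d' \<Longrightarrow>
        \<exists>b \<in> hom T B B'. cmp T b x = cmp T x' a \<and> cmp T y' b = cmp T c y"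
  by (insert is_realization, unfold is_realization_def) metis+

lemma real_biproduct: "is_biproduct T A C S i1 i2 p1 p2 \<Longrightarrow> real T (ezero T C A) i1 p2"
  using additive_realization unfolding additive_realization_def by blast

lemma ET3_rule: "etri T A B C x y d \<Longrightarrow> etri T A' B' C' x' y' d' \<Longrightarrow>
        a \<in> hom T A A' \<Longrightarrow> b \<in> hom T B B' \<Longrightarrow> cmp T b x = cmp T x' a \<Longrightarrow>
        \<exists>c \<in> hom T C C'. cmp T c y = cmp T y' b \<and> epush T C a d = epull T A' c d'"
  using ET3 unfolding ET3_def by blast

lemma ET4_rule: "etri T A B D f f' d \<Longrightarrow> etri T B C F g g' d' \<Longrightarrow>
        \<exists>E h h' dd e d''.
           etri T A C E h h' d'' \<and> dd \<in> hom T D E \<and> e \<in> hom T E F \<and>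
           etri T D E F dd e (epush T F f' d') \<and>
           epull T A dd d'' = d \<and>
           epush T E f d'' = epull T B e d' \<and>
           h = cmp T g f \<and> cmp T h' g = cmp T dd f' \<and> cmp T e h' = g'"
  using ET4 unfolding ET4_def by blast

lemma ET4op_rule: "etri T D A B f' f d \<Longrightarrow> etri T F B C g' g d' \<Longrightarrow>
        \<exists>E h h' dd e d''.
           etri T E A C h' h d'' \<and> dd \<in> hom T D E \<and> e \<in> hom T E F \<and>
           etri T D E F dd e (epull T D g' d) \<and>
           d' = epush T C e d'' \<and>
           epush T B dd d = epull T E g d'' \<and>
           h = cmp T g f \<and> cmp T h' dd = f' \<and> cmp T f h' = cmp T g' e"
  using ET4op unfolding ET4op_def by blast

lemma madd_idem_zero:
  assumes f: "f \<in> hom T A B" and idem: "madd T f f = f"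
  shows "f = mzero T A B"
proof -
  obtain g where g: "g \<in> hom T A B" "madd T f g = mzero T A B" using add_inverse_ex[OF f] by blast
  have "mzero T A B = madd T (madd T f f) g" using idem g by simp
  also have "\<dots> = f" using add_assoc[OF f f g(1)] g add_zero_right[OF f] by simp
  finally show ?thesis by simp
qed

lemma eadd_idem_zero:
  assumes C: "C \<in> obj T" and A: "A \<in> obj T" and d: "d \<in> Ext T C A" and idem: "eadd T C A d d = d"
  shows "d = ezero T C A"
proof -
  obtain e where e: "e \<in> Ext T C A" "eadd T C A d e = ezero T C A" using eadd_inverse_ex[OF C A d] by blast
  have "ezero T C A = eadd T C A (eadd T C A d d) e" using idem e by simp
  also have "\<dots> = d" using eadd_assoc[OF C A d d e(1)] e eadd_ezero[OF C A d] by simp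
  finally show ?thesis by simp
qed

lemma mzero_add_mzero: "A \<in> obj T \<Longrightarrow> B \<in> obj T \<Longrightarrow> madd T (mzero T A B) (mzero T A B) = mzero T A B"
  using add_zero_right zero_hom by blast

lemma comp_mzero_right:
  assumes f: "f \<in> hom T B C" and A: "A \<in> obj T"
  shows "cmp T f (mzero T A B) = mzero T A C"
proof -
  have B: "B \<in> obj T" using hom_objs[OF f] by simp
  have z: "mzero T A B \<in> hom T A B" using zero_hom[OF A B] .
  have "cmp T f (mzero T A B) = madd T (cmp T f (mzero T A B)) (cmp T f (mzero T A B))"
    using comp_distrib_left[OF z z f] mzero_add_mzero[OF A B] by simp
  then show ?thesis using madd_idem_zero[OF comp_hom[OF z f]] by simp
qed

lemma comp_mzero_left:
  assumes f: "f \<in> hom T A B" and C: "C \<in> obj T"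
  shows "cmp T (mzero T B C) f = mzero T A C"
proof -
  have B: "B \<in> obj T" using hom_objs[OF f] by simp
  have z: "mzero T B C \<in> hom T B C" using zero_hom[OF B C] .
  have "cmp T (mzero T B C) f = madd T (cmp T (mzero T B C) f) (cmp T (mzero T B C) f)"
    using comp_distrib_right[OF z z f] mzero_add_mzero[OF B C] by simp
  then show ?thesis using madd_idem_zero[OF comp_hom[OF f z]] by simp
qed

lemma epush_mzero:
  assumes C: "C \<in> obj T" and A: "A \<in> obj T" and B: "B \<in> obj T" and d: "d \<in> Ext T C A"
  shows "epush T C (mzero T A B) d = ezero T C B"
proof -
  have z: "mzero T A B \<in> hom T A B" using zero_hom[OF A B] .
  have "epush T C (mzero T A B) d = eadd T C B (epush T C (mzero T A B) d) (epush T C (mzero T A B) d)"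
    using epush_madd[OF C z z d] mzero_add_mzero[OF A B] by simp
  then show ?thesis using eadd_idem_zero[OF C B epush_Ext[OF C z d]] by simp
qed

lemma epull_mzero:
  assumes C: "C \<in> obj T" and A: "A \<in> obj T" and C': "C' \<in> obj T" and d: "d \<in> Ext T C A"
  shows "epull T A (mzero T C' C) d = ezero T C' A"
proof -
  have z: "mzero T C' C \<in> hom T C' C" using zero_hom[OF C' C] .
  have "epull T A (mzero T C' C) d = eadd T C' A (epull T A (mzero T C' C) d) (epull T A (mzero T C' C) d)"
    using epull_madd[OF A z z d] mzero_add_mzero[OF C' C] by simp
  then show ?thesis using eadd_idem_zero[OF C' A epull_Ext[OF A z d]] by simp
qed

lemma epush_ezero:
  assumes C: "C \<in> obj T" and a: "a \<in> hom T A B"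
  shows "epush T C a (ezero T C A) = ezero T C B"
proof -
  have A: "A \<in> obj T" and B: "B \<in> obj T" using hom_objs[OF a] by auto
  have z: "ezero T C A \<in> Ext T C A" using ezero_Ext[OF C A] .
  have "epush T C a (ezero T C A) = eadd T C B (epush T C a (ezero T C A)) (epush T C a (ezero T C A))"
    using epush_eadd[OF C a z z] eadd_ezero[OF C A z] by simp
  then show ?thesis using eadd_idem_zero[OF C B epush_Ext[OF C a z]] by simp
qed

lemma epull_ezero:
  assumes A: "A \<in> obj T" and c: "c \<in> hom T C' C"
  shows "epull T A c (ezero T C A) = ezero T C' A"
proof -
  have C: "C \<in> obj T" and C': "C' \<in> obj T" using hom_objs[OF c] by auto
  have z: "ezero T C A \<in> Ext T C A" using ezero_Ext[OF C A] .
  have "epull T A c (ezero T C A) = eadd T C' A (epull T A c (ezero T C A)) (epull T A c (ezero T C A))"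
    using epull_eadd[OF A c z z] eadd_ezero[OF C A z] by simp
  then show ?thesis using eadd_idem_zero[OF C' A epull_Ext[OF A c z]] by simp
qed

lemma biproduct_zero_left:
  assumes Z: "is_zero_obj T Z" and C: "C \<in> obj T"
  shows "is_biproduct T Z C C (mzero T Z C) (idm T C) (mzero T C Z) (idm T C)"
proof -
  have Zo: "Z \<in> obj T" and idZ: "idm T Z = mzero T Z Z" using Z unfolding is_zero_obj_def by auto
  have h: "mzero T Z C \<in> hom T Z C" "mzero T C Z \<in> hom T C Z" "idm T C \<in> hom T C C"
    using zero_hom Zo C id_hom by auto
  have "madd T (cmp T (mzero T Z C) (mzero T C Z)) (cmp T (idm T C) (idm T C)) = idm T C"
    using comp_mzero_left[OF h(2) C] comp_id_left[OF h(3)]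
      add_commute[OF zero_hom[OF C C] h(3)] add_zero_right[OF h(3)] by simp
  then show ?thesis
    unfolding is_biproduct_def
    using h idZ comp_mzero_left[OF h(1) Zo] comp_id_right[OF h(2)] comp_id_left[OF h(1)] comp_id_left[OF h(3)]
    by simp
qed

lemma biproduct_zero_right:
  assumes Z: "is_zero_obj T Z" and B: "B \<in> obj T"
  shows "is_biproduct T B Z B (idm T B) (mzero T Z B) (idm T B) (mzero T B Z)"
proof -
  have Zo: "Z \<in> obj T" and idZ: "idm T Z = mzero T Z Z" using Z unfolding is_zero_obj_def by auto
  have h: "mzero T Z B \<in> hom T Z B" "mzero T B Z \<in> hom T B Z" "idm T B \<in> hom T B B"
    using zero_hom Zo B id_hom by auto
  have "madd T (cmp T (idm T B) (idm T B)) (cmp T (mzero T Z B) (mzero T B Z)) = idm T B"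
    using comp_mzero_left[OF h(2) B] comp_id_left[OF h(3)] add_zero_right[OF h(3)] by simp
  then show ?thesis
    unfolding is_biproduct_def
    using h idZ comp_mzero_left[OF h(1) Zo] comp_id_left[OF h(1)] comp_id_right[OF h(2)] comp_id_left[OF h(3)]
    by simp
qed

lemma etriD:
  "etri T A B C x y d \<Longrightarrow>
    A \<in> obj T \<and> B \<in> obj T \<and> C \<in> obj T \<and> x \<in> hom T A B \<and> y \<in> hom T B C \<and> d \<in> Ext T C A"
  unfolding etri_def using hom_objs by blast

lemma conflationD: "conflation T A B C \<Longrightarrow> A \<in> obj T \<and> B \<in> obj T \<and> C \<in> obj T"
  unfolding conflation_def using etriD by blast

lemma etri_biproduct:
  assumes bp: "is_biproduct T A C S i1 i2 p1 p2"
  shows "etri T A S C i1 p2 (ezero T C A)"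
proof -
  have "i1 \<in> hom T A S" "p2 \<in> hom T S C" using bp unfolding is_biproduct_def by auto
  then have "mdom T i1 = A" "mcod T i1 = S" "mcod T p2 = C" unfolding hom_def by auto
  then show ?thesis using etri_real[OF real_biproduct[OF bp]] by simp
qed

lemma conflation_zero_left: "is_zero_obj T Z \<Longrightarrow> C \<in> obj T \<Longrightarrow> conflation T Z C C"
  unfolding conflation_def using etri_biproduct[OF biproduct_zero_left] by blast

lemma epush_inflation:
  assumes t: "etri T A B C x y d"
  shows "epush T C x d = ezero T C B"
proof -
  obtain Z where Z: "is_zero_obj T Z" using zero_object_ex by blast
  have B: "B \<in> obj T" and x: "x \<in> hom T A B" using etriD[OF t] by auto
  have split: "etri T B B Z (idm T B) (mzero T B Z) (ezero T Z B)"
    using etri_biproduct[OF biproduct_zero_right[OF Z B]] .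
  obtain c where "c \<in> hom T C Z" "epush T C x d = epull T B c (ezero T Z B)"
    using ET3_rule[OF t split x id_hom[OF B] refl] by blast
  then show ?thesis using epull_ezero[OF B] by simp
qed

lemma etri_comp_zero:
  assumes t: "etri T A B C x y d"
  shows "cmp T y x = mzero T A C"
proof -
  obtain Z where Z: "is_zero_obj T Z" using zero_object_ex by blast
  have Zo: "Z \<in> obj T" using Z unfolding is_zero_obj_def by simp
  have o: "A \<in> obj T" "C \<in> obj T" "x \<in> hom T A B" "d \<in> Ext T C A" using etriD[OF t] by auto
  have split: "etri T A A Z (idm T A) (mzero T A Z) (ezero T Z A)"
    using etri_biproduct[OF biproduct_zero_right[OF Z o(1)]] .
  have "epush T Z (idm T A) (ezero T Z A) = epull T A (mzero T Z C) d"
    using epush_id[OF Zo o(1) ezero_Ext[OF Zo o(1)]] epull_mzero[OF o(2) o(1) Zo o(4)] by simp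
  then obtain b where b: "b \<in> hom T A B" "cmp T b (idm T A) = cmp T x (idm T A)"
      "cmp T y b = cmp T (mzero T Z C) (mzero T A Z)"
    using etri_morphism[OF split t id_hom[OF o(1)] zero_hom[OF Zo o(2)]] by blast
  have "b = x" using b(2) comp_id_right[OF b(1)] comp_id_right[OF o(3)] by simp
  then show ?thesis using b(3) comp_mzero_left[OF zero_hom[OF o(1) Zo] o(2)] by simp
qed

lemma biproduct_iso_transport:
  assumes bp: "is_biproduct T A C S i1 i2 p1 p2"
    and b: "b \<in> hom T S B" and g: "g \<in> hom T B S"
    and gb: "cmp T g b = idm T S" and bg: "cmp T b g = idm T B"
  shows "is_biproduct T A C B (cmp T b i1) (cmp T b i2) (cmp T p1 g) (cmp T p2 g)"
proof -
  have i1: "i1 \<in> hom T A S" and i2: "i2 \<in> hom T C S" and p1: "p1 \<in> hom T S A" and p2: "p2 \<in> hom T S C"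
    and sum: "madd T (cmp T i1 p1) (cmp T i2 p2) = idm T S"
    using bp unfolding is_biproduct_def by auto
  have cancel: "cmp T (cmp T h g) (cmp T b f) = cmp T h f" if f: "f \<in> hom T D S" and h: "h \<in> hom T S E" for f h D E
    using comp_assoc[OF f b comp_hom[OF g h]] comp_assoc[OF b g h] gb comp_id_right[OF h] by simp
  have "madd T (cmp T (cmp T b i1) (cmp T p1 g)) (cmp T (cmp T b i2) (cmp T p2 g))
      = cmp T b (cmp T (madd T (cmp T i1 p1) (cmp T i2 p2)) g)"
    using comp_assoc[OF g p1 i1] comp_assoc[OF g p2 i2] comp_assoc[OF comp_hom[OF g p1] i1 b]
      comp_assoc[OF comp_hom[OF g p2] i2 b] comp_distrib_right[OF comp_hom[OF p1 i1] comp_hom[OF p2 i2] g]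
      comp_distrib_left[OF comp_hom[OF g comp_hom[OF p1 i1]] comp_hom[OF g comp_hom[OF p2 i2]] b]
    by simp
  also have "\<dots> = idm T B" using sum comp_id_left[OF g] bg by simp
  finally show ?thesis
    using bp cancel[OF i1 p1] cancel[OF i2 p2] cancel[OF i2 p1] cancel[OF i1 p2]
      comp_hom[OF i1 b] comp_hom[OF i2 b] comp_hom[OF g p1] comp_hom[OF g p2]
    unfolding is_biproduct_def by simp
qed

lemma split_etri_biproduct:
  assumes t: "etri T A B C x y (ezero T C A)"
  shows "\<exists>s r. is_biproduct T A C B x s r y"
proof -
  have A: "A \<in> obj T" and C: "C \<in> obj T" and y: "y \<in> hom T B C" using etriD[OF t] by auto
  obtain S i1 i2 p1 p2 where bp: "is_biproduct T A C S i1 i2 p1 p2" using biproduct_ex[OF A C] by blast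
  obtain b where b: "is_iso T S B b" "cmp T b i1 = x" "cmp T y b = p2"
    using etri_unique[OF etri_biproduct[OF bp] t] by blast
  then obtain g where bh: "b \<in> hom T S B" and g: "g \<in> hom T B S" "cmp T g b = idm T S" "cmp T b g = idm T B"
    unfolding is_iso_def by blast
  have "cmp T p2 g = y" using b(3) comp_assoc[OF g(1) bh y] g(3) comp_id_right[OF y] by simp
  then show ?thesis using biproduct_iso_transport[OF bp bh g] b(2) by metis
qed

lemma Ext_zero_etri_split:
  assumes t: "etri T A B C x y d" and z: "Ext_zero T C A"
  shows "\<exists>s r. is_biproduct T A C B x s r y"
  using split_etri_biproduct t z etriD[OF t] unfolding Ext_zero_def by auto

lemma Ext_zero_retract:
  assumes s: "s \<in> hom T Y M" and r: "r \<in> hom T M Y" and rs: "cmp T r s = idm T Y"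
    and X: "X \<in> obj T" and z: "Ext_zero T X M"
  shows "Ext_zero T X Y"
proof -
  have Y: "Y \<in> obj T" using hom_objs[OF s] by simp
  have "t = ezero T X Y" if t: "t \<in> Ext T X Y" for t
  proof -
    have "t = epush T X r (epush T X s t)" using epush_id[OF X Y t] rs epush_comp[OF X s r t] by simp
    also have "\<dots> = ezero T X Y"
      using z epush_Ext[OF X s t] epush_ezero[OF X r] unfolding Ext_zero_def by auto
    finally show ?thesis .
  qed
  then show ?thesis unfolding Ext_zero_def using ezero_Ext[OF X Y] by blast
qed

lemma Ext_zero_iso:
  assumes "isomorphic T A B" and "X \<in> obj T" and "Ext_zero T X A"
  shows "Ext_zero T X B"
  using assms Ext_zero_retract unfolding isomorphic_def is_iso_def by blast

lemma Ext_zero_biproduct: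
  assumes bp: "is_biproduct T A B S i1 i2 p1 p2" and X: "X \<in> obj T"
    and za: "Ext_zero T X A" and zb: "Ext_zero T X B"
  shows "Ext_zero T X S"
proof -
  have i1: "i1 \<in> hom T A S" and i2: "i2 \<in> hom T B S" and p1: "p1 \<in> hom T S A" and p2: "p2 \<in> hom T S B"
    and sum: "madd T (cmp T i1 p1) (cmp T i2 p2) = idm T S"
    using bp unfolding is_biproduct_def by auto
  have S: "S \<in> obj T" using hom_objs[OF i1] by simp
  have "t = ezero T X S" if t: "t \<in> Ext T X S" for t
  proof -
    have "t = eadd T X S (epush T X i1 (epush T X p1 t)) (epush T X i2 (epush T X p2 t))"
      using epush_id[OF X S t] sum epush_madd[OF X comp_hom[OF p1 i1] comp_hom[OF p2 i2] t]
        epush_comp[OF X p1 i1 t] epush_comp[OF X p2 i2 t] by simp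
    also have "\<dots> = ezero T X S"
      using za zb epush_Ext[OF X p1 t] epush_Ext[OF X p2 t] epush_ezero[OF X i1] epush_ezero[OF X i2]
        eadd_ezero[OF X S ezero_Ext[OF X S]]
      unfolding Ext_zero_def by auto
    finally show ?thesis .
  qed
  then show ?thesis unfolding Ext_zero_def using ezero_Ext[OF X S] by blast
qed

lemma injective_Ext_zero:
  assumes I: "injective T I" and Y: "Y \<in> obj T"
  shows "Ext_zero T Y I"
proof -
  have Io: "I \<in> obj T" using I unfolding injective_def by simp
  have "t = ezero T Y I" if t: "t \<in> Ext T Y I" for t
  proof -
    obtain B x y where tr: "etri T I B Y x y t" using etri_realize[OF Y Io t] by blast
    then obtain g where g: "g \<in> hom T B I" "cmp T g x = idm T I"
      using I id_hom[OF Io] unfolding injective_def by blast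
    have x: "x \<in> hom T I B" using etriD[OF tr] by simp
    have "t = epush T Y g (epush T Y x t)" using epush_id[OF Y Io t] g epush_comp[OF Y x g(1) t] by simp
    then show ?thesis using epush_inflation[OF tr] epush_ezero[OF Y g(1)] by simp
  qed
  then show ?thesis unfolding Ext_zero_def using ezero_Ext[OF Y Io] by blast
qed

lemma injective_retract:
  assumes I: "injective T I" and s: "s \<in> hom T L I" and r: "r \<in> hom T I L"
    and rs: "cmp T r s = idm T L"
  shows "injective T L"
  unfolding injective_def
proof (intro conjI allI impI)
  show "L \<in> obj T" using hom_objs[OF s] by simp
next
  fix A B C x y d f assume t: "etri T A B C x y d" and f: "f \<in> hom T A L"
  obtain g where g: "g \<in> hom T B I" "cmp T g x = cmp T s f"
    using I t comp_hom[OF f s] unfolding injective_def by blast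
  have x: "x \<in> hom T A B" using etriD[OF t] by simp
  have "cmp T (cmp T r g) x = f"
    using comp_assoc[OF x g(1) r] g(2) comp_assoc[OF f s r] rs comp_id_left[OF f] by simp
  then show "\<exists>g\<in>hom T B L. cmp T g x = f" using comp_hom[OF g(1) r] by blast
qed

lemma injective_iso: "injective T I \<Longrightarrow> isomorphic T I L \<Longrightarrow> injective T L"
  using injective_retract unfolding isomorphic_def is_iso_def by blast

lemma injective_cosyzygy:
  assumes I: "injective T I" and J: "injective T J" and c: "conflation T I J L"
  shows "injective T L"
proof -
  obtain x y d where t: "etri T I J L x y d" using c unfolding conflation_def by blast
  have "L \<in> obj T" using etriD[OF t] by simp
  then obtain s r where "is_biproduct T I L J x s r y"
    using Ext_zero_etri_split[OF t injective_Ext_zero[OF I]] by blast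
  then show ?thesis using injective_retract[OF J] unfolding is_biproduct_def by blast
qed

lemma epull_exact:
  assumes t: "etri T A B C x y d" and C1: "C1 \<in> obj T" and th: "th \<in> Ext T C1 A"
    and z: "epush T C1 x th = ezero T C1 B"
  shows "\<exists>c \<in> hom T C1 C. th = epull T A c d"
proof -
  have A: "A \<in> obj T" and B: "B \<in> obj T" and x: "x \<in> hom T A B" using etriD[OF t] by auto
  obtain P p q where tp: "etri T A P C1 p q th" using etri_realize[OF C1 A th] by blast
  have p: "p \<in> hom T A P" using etriD[OF tp] by simp
  obtain S i1 i2 p1 p2 where bp: "is_biproduct T B C1 S i1 i2 p1 p2" using biproduct_ex[OF B C1] by blast
  have i1: "i1 \<in> hom T B S" and p1: "p1 \<in> hom T S B" and p1i1: "cmp T p1 i1 = idm T B"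
    using bp unfolding is_biproduct_def by auto
  have "epush T C1 x th = epull T B (idm T C1) (ezero T C1 B)"
    using z epull_id[OF C1 B ezero_Ext[OF C1 B]] by simp
  then obtain b where b: "b \<in> hom T P S" "cmp T b p = cmp T i1 x"
    using etri_morphism[OF tp etri_biproduct[OF bp] x id_hom[OF C1]] by blast
  have "cmp T (cmp T p1 b) p = cmp T x (idm T A)"
    using comp_assoc[OF p b(1) p1] b(2) comp_assoc[OF x i1 p1] p1i1 comp_id_left[OF x] comp_id_right[OF x]
    by simp
  then obtain c where "c \<in> hom T C1 C" "epush T C1 (idm T A) th = epull T A c d"
    using ET3_rule[OF tp t id_hom[OF A] comp_hom[OF b(1) p1]] by blast
  then show ?thesis using epush_id[OF C1 A th] by auto
qed

lemma epush_exact: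
  assumes t: "etri T A B C x y d" and X: "X \<in> obj T" and th: "th \<in> Ext T X B"
    and z: "epush T X y th = ezero T X C"
  shows "\<exists>a \<in> Ext T X A. th = epush T X x a"
proof -
  have A: "A \<in> obj T" and B: "B \<in> obj T" and x: "x \<in> hom T A B" using etriD[OF t] by auto
  obtain M m e where tm: "etri T B M X m e th" using etri_realize[OF X B th] by blast
  obtain E h h' dd e' d'' where
    r: "etri T A M E h h' d''" "e' \<in> hom T E X" "etri T C E X dd e' (epush T X y th)"
       "epush T E x d'' = epull T B e' th"
    using ET4_rule[OF t tm] by blast
  obtain s r0 where "is_biproduct T C X E dd s r0 e'" using split_etri_biproduct r(3) z by fastforce
  then have s: "s \<in> hom T X E" and es: "cmp T e' s = idm T X" unfolding is_biproduct_def by auto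
  have d'': "d'' \<in> Ext T E A" using etriD[OF r(1)] by simp
  have "th = epull T B s (epull T B e' th)" using epull_id[OF X B th] es epull_comp[OF B r(2) s th] by simp
  also have "\<dots> = epush T X x (epull T A s d'')" using r(4) epush_epull[OF x s d''] by simp
  finally show ?thesis using epull_Ext[OF A s d''] by blast
qed

lemma Ext_zero_conflation_middle:
  assumes c: "conflation T A B C" and X: "X \<in> obj T"
    and za: "Ext_zero T X A" and zc: "Ext_zero T X C"
  shows "Ext_zero T X B"
proof -
  obtain x y d where t: "etri T A B C x y d" using c unfolding conflation_def by blast
  have B: "B \<in> obj T" and x: "x \<in> hom T A B" and y: "y \<in> hom T B C" using etriD[OF t] by auto
  have "th = ezero T X B" if th: "th \<in> Ext T X B" for th
  proof -
    have "epush T X y th = ezero T X C" using zc epush_Ext[OF X y th] unfolding Ext_zero_def by auto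
    then obtain a where "a \<in> Ext T X A" "th = epush T X x a" using epush_exact[OF t X th] by blast
    then show ?thesis using za epush_ezero[OF X x] unfolding Ext_zero_def by auto
  qed
  then show ?thesis unfolding Ext_zero_def using ezero_Ext[OF X B] by blast
qed

lemma madd_exchange:
  assumes p: "p \<in> hom T A B" and q: "q \<in> hom T A B" and v: "v \<in> hom T A B" and w: "w \<in> hom T A B"
  shows "madd T (madd T p q) (madd T v w) = madd T (madd T p v) (madd T q w)"
proof -
  have "madd T (madd T p q) (madd T v w) = madd T p (madd T (madd T q v) w)"
    using add_assoc[OF p q add_hom[OF v w]] add_assoc[OF q v w] by simp
  also have "\<dots> = madd T p (madd T (madd T v q) w)" using add_commute[OF q v] by simp
  also have "\<dots> = madd T (madd T p v) (madd T q w)"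
    using add_assoc[OF v q w] add_assoc[OF p v add_hom[OF q w]] by simp
  finally show ?thesis .
qed

lemma epush_eq_epull_offset:
  assumes t: "etri T A B C x y d" and C1: "C1 \<in> obj T"
    and e: "e \<in> Ext T C1 A" and d1: "d1 \<in> Ext T C1 A"
    and eq: "epush T C1 x e = epush T C1 x d1"
  shows "\<exists>c \<in> hom T C1 C. eadd T C1 A e (epull T A c d) = d1"
proof -
  have A: "A \<in> obj T" and x: "x \<in> hom T A B" using etriD[OF t] by auto
  obtain n where n: "n \<in> Ext T C1 A" "eadd T C1 A e n = ezero T C1 A" using eadd_inverse_ex[OF C1 A e] by blast
  have "epush T C1 x (eadd T C1 A d1 n) = epush T C1 x (eadd T C1 A e n)"
    using epush_eadd[OF C1 x d1 n(1)] epush_eadd[OF C1 x e n(1)] eq by simp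
  also have "\<dots> = ezero T C1 B" using n(2) epush_ezero[OF C1 x] by simp
  finally obtain c where c: "c \<in> hom T C1 C" "eadd T C1 A d1 n = epull T A c d"
    using epull_exact[OF t C1 eadd_Ext[OF C1 A d1 n(1)]] by blast
  have "eadd T C1 A e (eadd T C1 A d1 n) = eadd T C1 A (eadd T C1 A e n) d1"
    using eadd_commute[OF C1 A d1 n(1)] eadd_assoc[OF C1 A e n(1) d1] by simp
  also have "\<dots> = d1"
    using n(2) eadd_commute[OF C1 A d1 ezero_Ext[OF C1 A]] eadd_ezero[OF C1 A d1] by simp
  finally show ?thesis using c by auto
qed

lemma biproduct_shear:
  assumes bp: "is_biproduct T C2 C1 E dd s r e"
    and t: "t \<in> hom T C1 C2" and u: "u \<in> hom T C1 C2" and tu: "madd T t u = mzero T C1 C2"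
  shows "is_biproduct T C1 C2 E (madd T s (cmp T dd t)) dd e (madd T r (cmp T u e))"
proof -
  have dd: "dd \<in> hom T C2 E" and s: "s \<in> hom T C1 E" and r: "r \<in> hom T E C2" and e: "e \<in> hom T E C1"
    and rd: "cmp T r dd = idm T C2" and es: "cmp T e s = idm T C1" and rs: "cmp T r s = mzero T C1 C2"
    and ed: "cmp T e dd = mzero T C2 C1" and sum: "madd T (cmp T dd r) (cmp T s e) = idm T E"
    using bp unfolding is_biproduct_def by auto
  have C1: "C1 \<in> obj T" and C2: "C2 \<in> obj T" and E: "E \<in> obj T" using hom_objs dd s by auto
  define s' where "s' = madd T s (cmp T dd t)"
  define r' where "r' = madd T r (cmp T u e)"
  have dt: "cmp T dd t \<in> hom T C1 E" and ue: "cmp T u e \<in> hom T E C2"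
    and s': "s' \<in> hom T C1 E" and r': "r' \<in> hom T E C2"
    using comp_hom[OF t dd] comp_hom[OF e u] add_hom s r unfolding s'_def r'_def by auto
  have es': "cmp T e s' = idm T C1"
    using comp_distrib_left[OF s dt e] comp_assoc[OF t dd e] ed comp_mzero_left[OF t C1] es
      add_zero_right[OF id_hom[OF C1]] unfolding s'_def by simp
  have r'd: "cmp T r' dd = idm T C2"
    using comp_distrib_right[OF r ue dd] comp_assoc[OF dd e u] ed comp_mzero_right[OF u C2] rd
      add_zero_right[OF id_hom[OF C2]] unfolding r'_def by simp
  have "cmp T r' s = u"
    using comp_distrib_right[OF r ue s] rs comp_assoc[OF s e u] es comp_id_right[OF u]
      add_commute[OF zero_hom[OF C1 C2] u] add_zero_right[OF u] unfolding r'_def by simp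
  then have r's': "cmp T r' s' = mzero T C1 C2"
    using comp_distrib_left[OF s dt r'] comp_assoc[OF t dd r'] r'd comp_id_left[OF t] tu add_commute[OF t u]
    unfolding s'_def by simp
  have "madd T (cmp T (cmp T dd t) e) (cmp T dd (cmp T u e)) = cmp T dd (cmp T (madd T t u) e)"
    using comp_assoc[OF e t dd] comp_distrib_right[OF t u e] comp_distrib_left[OF comp_hom[OF e t] ue dd]
    by simp
  also have "\<dots> = mzero T E E" using tu comp_mzero_left[OF e C2] comp_mzero_right[OF dd E] by simp
  finally have "madd T (cmp T s' e) (cmp T dd r') = madd T (madd T (cmp T s e) (cmp T dd r)) (mzero T E E)"
    using comp_distrib_right[OF s dt e] comp_distrib_left[OF r ue dd]
      madd_exchange[OF comp_hom[OF e s] comp_hom[OF e dt] comp_hom[OF r dd] comp_hom[OF ue dd]]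
    unfolding s'_def r'_def by simp
  also have "\<dots> = idm T E"
    using add_zero_right[OF add_hom[OF comp_hom[OF e s] comp_hom[OF r dd]]]
      add_commute[OF comp_hom[OF e s] comp_hom[OF r dd]] sum by simp
  finally show ?thesis
    using s' dd e r' es' r'd ed r's' unfolding is_biproduct_def s'_def r'_def by simp
qed

lemma realign_split_section:
  assumes t: "etri T A B C x y d" and bp: "is_biproduct T C C1 E dd s r e"
    and eps: "eps \<in> Ext T E A" and dd_eps: "epull T A dd eps = d" and d1: "d1 \<in> Ext T C1 A"
    and eq: "epush T C1 x (epull T A s eps) = epush T C1 x d1"
  shows "\<exists>s' r'. etri T C1 E C s' r' (ezero T C C1) \<and> epull T A s' eps = d1"
proof -
  have dd: "dd \<in> hom T C E" and s: "s \<in> hom T C1 E" using bp unfolding is_biproduct_def by auto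
  have A: "A \<in> obj T" and C1: "C1 \<in> obj T" using etriD[OF t] hom_objs[OF s] by auto
  obtain c where c: "c \<in> hom T C1 C" "eadd T C1 A (epull T A s eps) (epull T A c d) = d1"
    using epush_eq_epull_offset[OF t C1 epull_Ext[OF A s eps] d1 eq] by blast
  obtain u where u: "u \<in> hom T C1 C" "madd T c u = mzero T C1 C" using add_inverse_ex[OF c(1)] by blast
  have "etri T C1 E C (madd T s (cmp T dd c)) (madd T r (cmp T u e)) (ezero T C C1)"
    using etri_biproduct[OF biproduct_shear[OF bp c(1) u]] .
  moreover have "epull T A (madd T s (cmp T dd c)) eps = d1"
    using epull_madd[OF A s comp_hom[OF c(1) dd] eps] epull_comp[OF A dd c(1) eps] dd_eps c(2) by simp
  ultimately show ?thesis by blast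
qed

(* Realise x2_* d1 as B2 \<rightarrow> M \<rightarrow> C1. (ET4) glues it to A \<rightarrow> B2 \<rightarrow> C2, giving A \<rightarrow> M \<rightarrow> E and a
   split conflation C2 \<rightarrow> E \<rightarrow> C1; once the splitting is realigned so that its section pulls the
   class of A \<rightarrow> M \<rightarrow> E back to d1, (ET4)^op recovers A \<rightarrow> B1 \<rightarrow> C1, up to isomorphism, inside M. *)
lemma conflation_pushout:
  assumes "conflation T A B1 C1" and "conflation T A B2 C2"
  shows "\<exists>M E'. conflation T B2 M C1 \<and> conflation T E' M C2 \<and> isomorphic T B1 E'"
proof -
  obtain x1 y1 d1 x2 y2 d2 where t1: "etri T A B1 C1 x1 y1 d1" and t2: "etri T A B2 C2 x2 y2 d2"
    using assms unfolding conflation_def by blast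
  have A: "A \<in> obj T" and C1: "C1 \<in> obj T" and d1: "d1 \<in> Ext T C1 A"
    and B2: "B2 \<in> obj T" and C2: "C2 \<in> obj T" and x2: "x2 \<in> hom T A B2" and y2: "y2 \<in> hom T B2 C2"
    using etriD[OF t1] etriD[OF t2] by auto
  define th where "th = epush T C1 x2 d1"
  have th: "th \<in> Ext T C1 B2" using epush_Ext[OF C1 x2 d1] unfolding th_def .
  obtain M m e' where tm: "etri T B2 M C1 m e' th" using etri_realize[OF C1 B2 th] by blast
  obtain E h h' dd e eps where
    r: "etri T A M E h h' eps" "etri T C2 E C1 dd e (epush T C1 y2 th)"
       "epull T A dd eps = d2" "epush T E x2 eps = epull T B2 e th"
    using ET4_rule[OF t2 tm] by blast
  have "epush T C1 y2 th = ezero T C1 C2"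
    using epush_comp[OF C1 x2 y2 d1] etri_comp_zero[OF t2] epush_mzero[OF C1 A C2 d1] unfolding th_def by simp
  then obtain s r0 where bp: "is_biproduct T C2 C1 E dd s r0 e" using split_etri_biproduct r(2) by metis
  have s: "s \<in> hom T C1 E" and e: "e \<in> hom T E C1" and es: "cmp T e s = idm T C1"
    using bp unfolding is_biproduct_def by auto
  have eps: "eps \<in> Ext T E A" using etriD[OF r(1)] by simp
  have "epush T C1 x2 (epull T A s eps) = epush T C1 x2 d1"
    using epush_epull[OF x2 s eps] r(4) epull_comp[OF B2 e s th] es epull_id[OF C1 B2 th] th_def by simp
  then obtain s' r' where split: "etri T C1 E C2 s' r' (ezero T C2 C1)" "epull T A s' eps = d1"
    using realign_split_section[OF t2 bp eps r(3) d1] by blast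
  then obtain E' k k' dd' e'' d3 where "etri T E' M C2 k' k d3" "etri T A E' C1 dd' e'' d1"
    using ET4op_rule[OF r(1) split(1)] by metis
  then show ?thesis
    using tm etri_unique[OF t1] unfolding conflation_def isomorphic_def by blast
qed

lemma conflation_ET4:
  "conflation T A B D \<Longrightarrow> conflation T B C F \<Longrightarrow> \<exists>E. conflation T A C E \<and> conflation T D E F"
  using ET4_rule unfolding conflation_def by metis

lemma hat_subset_obj:
  assumes "Z \<subseteq> obj T"
  shows "hat T Z \<subseteq> obj T"
proof
  fix C assume "C \<in> hat T Z"
  then show "C \<in> obj T"
  proof (induction rule: hat_induct)
    case (base C)
    then show ?case using assms by blast
  next
    case (step K Z0 C)
    then show ?case using conflationD by blast
  qed
qed

lemma injective_higher_Ext_zero: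
  assumes "injective T I" and A: "A \<in> obj T"
  shows "higher_Ext_zero T (Suc j) A I"
  using assms(1)
proof (induction j arbitrary: I)
  case 0
  then show ?case unfolding higher_Ext_zero_Suc_0 using injective_Ext_zero[OF _ A] by blast
next
  case (Suc j)
  show ?case
  proof (rule higher_Ext_zero_SucI)
    fix J Y' assume "injective T J" "conflation T I J Y'"
    then show "higher_Ext_zero T (Suc j) A Y'" using Suc injective_cosyzygy by blast
  qed
qed

end

locale cotorsion_setting = extri_cat +
  fixes X W :: "'o set"
  assumes enough_injectives: "enough_injectives T"
    and X_subcat: "subcat_in T (obj T) X" and W_subcat: "subcat_in T (obj T) W"
    and X_ext_closed: "ext_closed T X" and W_inj_cogenerator: "inj_cogenerator T X W"
begin

lemma X_subset_obj: "X \<subseteq> obj T"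
  using X_subcat unfolding subcat_in_def by blast

lemma W_subset_X: "W \<subseteq> X"
  using W_inj_cogenerator unfolding inj_cogenerator_def by blast

lemma cogenerator_conflation: "A \<in> X \<Longrightarrow> \<exists>V A'. V \<in> W \<and> A' \<in> X \<and> conflation T A V A'"
  using W_inj_cogenerator unfolding inj_cogenerator_def by blast

lemma injective_conflation_ex: "Y \<in> obj T \<Longrightarrow> \<exists>I Y'. injective T I \<and> conflation T Y I Y'"
  using enough_injectives unfolding enough_injectives_def by blast

definition Ext_perp :: "nat \<Rightarrow> 'o \<Rightarrow> bool" where
  "Ext_perp j Y \<longleftrightarrow> (\<forall>A \<in> X. higher_Ext_zero T (Suc j) A Y)"

lemma Ext_perp_0: "Ext_perp 0 Y \<longleftrightarrow> (\<forall>A \<in> X. Ext_zero T A Y)"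
  unfolding Ext_perp_def higher_Ext_zero_Suc_0 ..

lemma Ext_perp_cosyzygy:
  assumes "injective T J" and "conflation T Y J Y'" and "Ext_perp (Suc j) Y"
  shows "Ext_perp j Y'"
  using assms(3) higher_Ext_zero_cosyzygy[OF assms(1,2)] unfolding Ext_perp_def by blast

lemma Ext_perp_SucI:
  assumes "\<And>J Y'. injective T J \<Longrightarrow> conflation T Y J Y' \<Longrightarrow> Ext_perp j Y'"
  shows "Ext_perp (Suc j) Y"
  unfolding Ext_perp_def
proof
  fix A assume "A \<in> X"
  then show "higher_Ext_zero T (Suc (Suc j)) A Y"
    using assms unfolding Ext_perp_def by (intro higher_Ext_zero_SucI) blast
qed

lemma injective_Ext_perp: "injective T I \<Longrightarrow> Ext_perp j I"
  unfolding Ext_perp_def using injective_higher_Ext_zero X_subset_obj by blast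

lemma W_Ext_perp: "V \<in> W \<Longrightarrow> Ext_perp j V"
  using W_inj_cogenerator unfolding Ext_perp_def inj_cogenerator_def by simp

lemma Ext_perp_0_conflation_middle:
  "conflation T A B C \<Longrightarrow> Ext_perp 0 A \<Longrightarrow> Ext_perp 0 C \<Longrightarrow> Ext_perp 0 B"
  unfolding Ext_perp_0 using Ext_zero_conflation_middle X_subset_obj by blast

definition perp_extension_closed :: "nat \<Rightarrow> bool" where
  "perp_extension_closed i \<longleftrightarrow> (\<forall>A B C. conflation T A B C \<longrightarrow>
      (\<forall>k\<le>i. Ext_perp k A \<and> Ext_perp k C) \<longrightarrow> Ext_perp i B)"

definition perp_cone_closed :: "nat \<Rightarrow> bool" where
  "perp_cone_closed i \<longleftrightarrow> (\<forall>K V Y. conflation T K V Y \<longrightarrow>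
      (\<forall>k\<le>Suc i. Ext_perp k K) \<longrightarrow> (\<forall>k\<le>i. Ext_perp k V) \<longrightarrow> Ext_perp i Y)"

lemma perp_extension_closed_0: "perp_extension_closed 0"
  unfolding perp_extension_closed_def using Ext_perp_0_conflation_middle by blast

lemma perp_cone_closed_0: "perp_cone_closed 0"
  unfolding perp_cone_closed_def
proof (intro allI impI)
  fix K V Y assume c: "conflation T K V Y" and pK: "\<forall>k\<le>Suc 0. Ext_perp k K" and pV: "\<forall>k\<le>0. Ext_perp k V"
  have K: "K \<in> obj T" and Y: "Y \<in> obj T" using conflationD[OF c] by auto
  obtain I K' where I: "injective T I" and cI: "conflation T K I K'" using injective_conflation_ex[OF K] by blast
  obtain M E' where m: "conflation T I M Y" "conflation T E' M K'" "isomorphic T V E'"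
    using conflation_pushout[OF c cI] by blast
  have "Ext_perp 0 V" using pV by simp
  then have "Ext_perp 0 E'" using Ext_zero_iso[OF m(3)] X_subset_obj unfolding Ext_perp_0 by blast
  then have "Ext_perp 0 M"
    using Ext_perp_0_conflation_middle[OF m(2)] Ext_perp_cosyzygy[OF I cI] pK by simp
  moreover obtain x y d where t: "etri T I M Y x y d" using m(1) unfolding conflation_def by blast
  then obtain s r where "is_biproduct T I Y M x s r y"
    using Ext_zero_etri_split[OF t injective_Ext_zero[OF I Y]] by blast
  ultimately show "Ext_perp 0 Y"
    using Ext_zero_retract X_subset_obj unfolding Ext_perp_0 is_biproduct_def by blast
qed

lemma perp_extension_closed_Suc:
  assumes cone: "perp_cone_closed j"
  shows "perp_extension_closed (Suc j)"
  unfolding perp_extension_closed_def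
proof (intro allI impI)
  fix A B C assume c: "conflation T A B C" and p: "\<forall>k\<le>Suc j. Ext_perp k A \<and> Ext_perp k C"
  show "Ext_perp (Suc j) B"
  proof (rule Ext_perp_SucI)
    fix I B' assume I: "injective T I" and cI: "conflation T B I B'"
    obtain E where e: "conflation T A I E" "conflation T C E B'" using conflation_ET4[OF c cI] by blast
    have "\<forall>k\<le>j. Ext_perp k E" using Ext_perp_cosyzygy[OF I e(1)] p by auto
    then show "Ext_perp j B'" using cone e(2) p unfolding perp_cone_closed_def by blast
  qed
qed

lemma perp_cone_closed_Suc:
  assumes ext: "\<forall>i\<le>j. perp_extension_closed i" and cone: "perp_cone_closed j"
  shows "perp_cone_closed (Suc j)"
  unfolding perp_cone_closed_def
proof (intro allI impI)
  fix K V Y assume c: "conflation T K V Y"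
    and pK: "\<forall>k\<le>Suc (Suc j). Ext_perp k K" and pV: "\<forall>k\<le>Suc j. Ext_perp k V"
  show "Ext_perp (Suc j) Y"
  proof (rule Ext_perp_SucI)
    fix I L assume I: "injective T I" and cI: "conflation T Y I L"
    have "V \<in> obj T" using conflationD[OF c] by simp
    then obtain J V' where J: "injective T J" and cJ: "conflation T V J V'"
      using injective_conflation_ex by blast
    obtain E where e: "conflation T K J E" "conflation T Y E V'" using conflation_ET4[OF c cJ] by blast
    obtain M E' where m: "conflation T E M L" "conflation T E' M V'" "isomorphic T I E'"
      using conflation_pushout[OF cI e(2)] by blast
    have pV': "\<forall>k\<le>j. Ext_perp k V'" using Ext_perp_cosyzygy[OF J cJ] pV by auto
    have "\<forall>k\<le>j. Ext_perp k M"
      using ext m(2) pV' injective_Ext_perp[OF injective_iso[OF I m(3)]]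
      unfolding perp_extension_closed_def by (meson order_trans)
    moreover have "\<forall>k\<le>Suc j. Ext_perp k E" using Ext_perp_cosyzygy[OF J e(1)] pK by auto
    ultimately show "Ext_perp j L" using cone m(1) unfolding perp_cone_closed_def by blast
  qed
qed

lemma perp_closed_upto: "\<forall>i\<le>j. perp_extension_closed i \<and> perp_cone_closed i"
proof (induction j)
  case 0
  then show ?case using perp_extension_closed_0 perp_cone_closed_0 by simp
next
  case (Suc j)
  then have "perp_extension_closed (Suc j)" "perp_cone_closed (Suc j)"
    using perp_extension_closed_Suc perp_cone_closed_Suc by simp_all
  then show ?case using Suc le_Suc_eq by auto
qed

lemma hat_W_Ext_perp: "Y \<in> hat T W \<Longrightarrow> Ext_perp j Y"
proof (induction arbitrary: j rule: hat_induct)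
  case (base V)
  then show ?case using W_Ext_perp by blast
next
  case (step K V Y)
  then show ?case using perp_closed_upto W_Ext_perp unfolding perp_cone_closed_def by blast
qed

lemma Ext_zero_X_hat_W: "A \<in> X \<Longrightarrow> Y \<in> hat T W \<Longrightarrow> Ext_zero T A Y"
  using hat_W_Ext_perp Ext_perp_0 by blast

lemma X_perp_in_W:
  assumes U: "U \<in> X" and perp: "\<forall>A \<in> X. Ext_zero T A U"
  shows "U \<in> W"
proof -
  obtain V U' where v: "V \<in> W" "U' \<in> X" "conflation T U V U'" using cogenerator_conflation[OF U] by blast
  obtain x y d where t: "etri T U V U' x y d" using v(3) unfolding conflation_def by blast
  obtain s r where "is_biproduct T U U' V x s r y" using Ext_zero_etri_split[OF t] perp v(2) by blast
  then show ?thesis using subcat_in_summand[OF W_subcat v(1)] conflationD[OF v(3)] by blast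
qed

lemma hat_X_left_approximation_step:
  assumes X0: "X0 \<in> X" and c: "conflation T K X0 C" and cV: "conflation T K V U" and U: "U \<in> X"
  shows "\<exists>M \<in> X. conflation T V M C"
proof -
  obtain M E' where m: "conflation T V M C" "conflation T E' M U" "isomorphic T X0 E'"
    using conflation_pushout[OF c cV] by blast
  have "E' \<in> X" using subcat_in_iso[OF X_subcat X0 _ m(3)] conflationD[OF m(2)] by blast
  then have "M \<in> X" using X_ext_closed m(2) U unfolding ext_closed_def by blast
  then show ?thesis using m(1) by blast
qed

lemma hat_X_right_approximation:
  "C \<in> hat T X \<Longrightarrow> \<exists>V U. V \<in> hat T W \<and> U \<in> X \<and> conflation T C V U"
proof (induction rule: hat_induct)
  case (base C)
  then show ?case using cogenerator_conflation hat_base[of _ W T] by blast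
next
  case (step K X0 C)
  then obtain V U where v: "V \<in> hat T W" "U \<in> X" "conflation T K V U" by blast
  obtain M where M: "M \<in> X" "conflation T V M C"
    using hat_X_left_approximation_step[OF step(1,2) v(3,2)] by blast
  obtain W' M' where w: "W' \<in> W" "M' \<in> X" "conflation T M W' M'" using cogenerator_conflation[OF M(1)] by blast
  obtain E where e: "conflation T V W' E" "conflation T C E M'" using conflation_ET4[OF M(2) w(3)] by blast
  then show ?case using hat_extend[OF w(1) e(1) v(1)] w(2) by blast
qed

lemma hat_X_left_approximation:
  assumes "C \<in> hat T X"
  shows "\<exists>V U. V \<in> hat T W \<and> U \<in> X \<and> conflation T V U C"
  using assms
proof (cases rule: hat_cases)
  case 1
  obtain Z where "Z \<in> W" "is_zero_obj T Z" using subcat_in_zero_obj[OF W_subcat] by blast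
  then show ?thesis using 1 X_subset_obj conflation_zero_left hat_base[of Z W T] by blast
next
  case (2 K X0)
  obtain V U where v: "V \<in> hat T W" "U \<in> X" "conflation T K V U"
    using hat_X_right_approximation[OF 2(3)] by blast
  then show ?thesis using hat_X_left_approximation_step[OF 2(1,2) v(3,2)] by blast
qed

lemma hat_X_perp_in_hat_W:
  assumes A: "A \<in> hat T X" and perp: "\<forall>U \<in> X. Ext_zero T U A"
  shows "A \<in> hat T W"
proof -
  obtain V U where v: "V \<in> hat T W" "U \<in> X" "conflation T V U A"
    using hat_X_left_approximation[OF A] by blast
  have "\<forall>U' \<in> X. Ext_zero T U' U"
    using Ext_zero_conflation_middle[OF v(3)] X_subset_obj Ext_zero_X_hat_W[OF _ v(1)] perp by blast
  then have "U \<in> W" using X_perp_in_W v(2) by blast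
  then show ?thesis using hat_extend[OF _ v(3) v(1)] by blast
qed

lemma subcat_in_hat_X_X: "subcat_in T (hat T X) X"
  by (rule subcat_in_restrict[OF X_subcat hat_subset_obj[OF X_subset_obj]]) (use hat_base[of _ X T] in blast)

lemma subcat_in_hat_X_hat_W: "subcat_in T (hat T X) (hat T W)"
  unfolding subcat_in_def
proof (intro conjI allI impI)
  show "hat T W \<subseteq> hat T X" using hat_mono[OF W_subset_X] .
  show "\<exists>Z \<in> hat T W. is_zero_obj T Z" using subcat_in_zero_obj[OF W_subcat] hat_base[of _ W T] by blast
next
  fix A B S i1 i2 p1 p2
  assume "A \<in> hat T W" "B \<in> hat T W" "S \<in> hat T X" "is_biproduct T A B S i1 i2 p1 p2"
  then show "S \<in> hat T W"
    using hat_X_perp_in_hat_W Ext_zero_biproduct X_subset_obj Ext_zero_X_hat_W by blast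
next
  fix A B assume "A \<in> hat T W" "B \<in> hat T X" "isomorphic T A B"
  then show "B \<in> hat T W"
    using hat_X_perp_in_hat_W Ext_zero_iso X_subset_obj Ext_zero_X_hat_W by blast
next
  fix A B S i1 i2 p1 p2
  assume "S \<in> hat T W" "A \<in> hat T X" "B \<in> hat T X" "is_biproduct T A B S i1 i2 p1 p2"
  then show "A \<in> hat T W"
    using hat_X_perp_in_hat_W Ext_zero_retract X_subset_obj Ext_zero_X_hat_W
    unfolding is_biproduct_def by blast
qed

theorem cotorsion_pair_hat: "cotorsion_pair_on T (hat T X) X (hat T W)"
  unfolding cotorsion_pair_on_def
  using subcat_in_hat_X_X subcat_in_hat_X_hat_W Ext_zero_X_hat_W
    hat_X_left_approximation hat_X_right_approximation by blast

end

theorem proposition4p5: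
  fixes T :: "('o, 'm, 'e) extri" and X W :: "'o set"
  assumes "extriangulated T"
    and "enough_projectives T" and "enough_injectives T"
    and "subcat_in T (obj T) X" and "subcat_in T (obj T) W"
    and "ext_closed T X" and "cocone_closed T X"
    and "inj_cogenerator T X W"
  shows "cotorsion_pair_on T (hat T X) X (hat T W)"
proof -
  interpret cotorsion_setting T X W
    using assms by unfold_locales
  show ?thesis by (rule cotorsion_pair_hat)
qed

end
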